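(* Let $A$ be a $*$-algebra with $*$-calculus carrying an integrable almost complex structure, $E$ a finitely generated projective holomorphic left $A$-module with holomorphic structure $\overline\partial_E$, and $\langle\,,\,\rangle:E\otimes_A\overline E\to A$ a (non-degenerate) hermitian metric. There is a unique left connection $\nabla_E$ (the Chern connection) preserving the hermitian metric with $(\pi^{0,1}\otimes\mathrm{id})\nabla_E=\overline{\partial}_E$. Writing its Christoffel matrix as $\Gamma=\Gamma_++\Gamma_-$ with $\Gamma_+\in M_n(\Omega^{1,0})$, $\Gamma_-\in M_n(\Omega^{0,1})$, the part $\Gamma_-$ is determined by $\overline\partial_E$ and $$-\Gamma_+=\partial g^\bullet\cdot g_\bullet+g^\bullet\,(\Gamma_-)^*\,g_\bullet,$$ where $(\Gamma_-)^*$ is the conjugate transpose, $((\Gamma_-)^* )_{ij}=((\Gamma_-)_{ji})^*$, and $\partial g^\bullet$ is applied entrywise.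
   Context: Integrable almost complex structure: bimodule decomposition $\Omega^n=\oplus_{p+q=n}\Omega^{p,q}$, ${\rm d}=\partial+\overline\partial$ with $\partial:\Omega^{p,q}\to\Omega^{p+1,q}$, $\overline\partial:\Omega^{p,q}\to\Omega^{p,q+1}$, $\partial^2=\overline\partial^2=0$, $\wedge$ respecting bidegree, $*$ exchanging $\Omega^{1,0},\Omega^{0,1}$, projections $\pi^{p,q}$. Holomorphic module: $\overline\partial_E:E\to\Omega^{0,1}\otimes_AE$, $\overline\partial_E(a.e)=\overline\partial a\otimes e+a.\overline\partial_Ee$, $(\overline\partial\otimes\mathrm{id}-\mathrm{id}\wedge\overline\partial_E)\overline\partial_E=0$. Matrix formalism: fix a dual basis $e^i\in E$, $e_i\in E^\circ={}_A{\rm Hom}(E,A)$, $1\le i\le n$, with $e=\sum_i e_i(e)e^i$; $P_{ji}=e_i(e^j)$, so $P^2=P$. Christoffel symbols: $\Gamma^i_k=-(\mathrm{id}\otimes{\rm ev})(\nabla_Ee^i\otimes e_k)$, so $\nabla_Ee^i=-\Gamma^i_k\otimes e^k$, and $\Gamma_{ij}=\Gamma^i_j$; these satisfy $\Gamma P=\Gamma$. Metric: $g^{ij}=\langle e^i,\overline{e^j}\rangle$; the isomorphism $G:\overline E\to E^\circ$ with $\langle,\rangle={\rm ev}(\mathrm{id}\otimes G)$ has $G(\overline{e^i})=e_jg^{ji}$ and $G^{-1}(e_i)=\overline{g_{ij}e^j}$, normalised so that $g_{ij}P_{jk}=g_{ik}$; $g^\bullet=(g^{ij})$, $g_\bullet=(g_{ij})$,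 satisfying $g^{\bullet*}=g^\bullet$, $g_\bullet^*=g_\bullet$, $g^\bullet g_\bullet=P$, $g_\bullet P=g_\bullet$, $Pg^\bullet=g^\bullet$. A connection preserves the metric if ${\rm d}\langle e,\overline f\rangle=(\mathrm{id}\otimes\langle,\rangle)(\nabla_Ee\otimes\overline f)+(\langle,\rangle\otimes\mathrm{id})(e\otimes\tilde\nabla\overline f)$ with $\tilde\nabla(\overline f)=\overline g\otimes\kappa^*$ when $\nabla_Ef=\kappa\otimes g$. *)

theory Defs
  imports Main
begin

(* Data of a *-algebra A (type 'a) with a *-differential calculus,    *)
(* truncated at degree 2: Omega^1 (type 'w) and Omega^2 (type 'v),    *)
(* together with the bidegree projections of an almost complex        *)
(* structure.                                                          *)

record ('a, 'w, 'v) calc =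
  astar :: "'a \<Rightarrow> 'a"
  lw    :: "'a \<Rightarrow> 'w \<Rightarrow> 'w"
  rw    :: "'w \<Rightarrow> 'a \<Rightarrow> 'w"
  dd    :: "'a \<Rightarrow> 'w"
  wstar :: "'w \<Rightarrow> 'w"
  lv    :: "'a \<Rightarrow> 'v \<Rightarrow> 'v"
  rv    :: "'v \<Rightarrow> 'a \<Rightarrow> 'v"
  wedge :: "'w \<Rightarrow> 'w \<Rightarrow> 'v"
  dd1   :: "'w \<Rightarrow> 'v"
  vstar :: "'v \<Rightarrow> 'v"
  p10   :: "'w \<Rightarrow> 'w"
  p01   :: "'w \<Rightarrow> 'w"
  q20   :: "'v \<Rightarrow> 'v"
  q11   :: "'v \<Rightarrow> 'v"
  q02   :: "'v \<Rightarrow> 'v"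

definition addit :: "('x::ab_group_add \<Rightarrow> 'y::ab_group_add) \<Rightarrow> bool" where
  "addit f \<longleftrightarrow> (\<forall>x y. f (x + y) = f x + f y)"

definition leftmod :: "('a::ring_1 \<Rightarrow> 'm::ab_group_add \<Rightarrow> 'm) \<Rightarrow> bool" where
  "leftmod l \<longleftrightarrow>
     (\<forall>a b x. l (a * b) x = l a (l b x)) \<and> (\<forall>x. l 1 x = x) \<and>
     (\<forall>a b x. l (a + b) x = l a x + l b x) \<and> (\<forall>a x y. l a (x + y) = l a x + l a y)"

definition bimod :: "('a::ring_1 \<Rightarrow> 'm::ab_group_add \<Rightarrow> 'm) \<Rightarrow> ('m \<Rightarrow> 'a \<Rightarrow> 'm) \<Rightarrow> bool" where
  "bimod l r \<longleftrightarrow> leftmod l \<and>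
     (\<forall>a b x. r x (a * b) = r (r x a) b) \<and> (\<forall>x. r x 1 = x) \<and>
     (\<forall>a b x. r x (a + b) = r x a + r x b) \<and> (\<forall>a x y. r (x + y) a = r x a + r y a) \<and>
     (\<forall>a x b. r (l a x) b = l a (r x b))"

definition bimod_map :: "('a::ring_1 \<Rightarrow> 'm::ab_group_add \<Rightarrow> 'm) \<Rightarrow> ('m \<Rightarrow> 'a \<Rightarrow> 'm) \<Rightarrow> ('m \<Rightarrow> 'm) \<Rightarrow> bool" where
  "bimod_map l r f \<longleftrightarrow> addit f \<and> (\<forall>a x. f (l a x) = l a (f x)) \<and> (\<forall>a x. f (r x a) = r (f x) a)"

definition star_algebra :: "('a::ring_1 \<Rightarrow> 'a) \<Rightarrow> bool" where
  "star_algebra s \<longleftrightarrow> (\<forall>a b. s (a + b) = s a + s b) \<and> (\<forall>a b. s (a * b) = s b * s a) \<and>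
     (\<forall>a. s (s a) = a)"

(* A *-algebra with *-differential calculus (degrees 0,1,2), generated in degrees 0 and 1 *)
definition star_calculus :: "('a::ring_1, 'w::ab_group_add, 'v::ab_group_add) calc \<Rightarrow> bool" where
  "star_calculus C \<longleftrightarrow>
     star_algebra (astar C) \<and> bimod (lw C) (rw C) \<and> bimod (lv C) (rv C) \<and>
     addit (dd C) \<and>
     (\<forall>a b. dd C (a * b) = rw C (dd C a) b + lw C a (dd C b)) \<and>
     (\<forall>\<xi>. \<exists>xs. \<xi> = sum_list (map (\<lambda>(a, b). lw C a (dd C b)) xs)) \<and>
     (\<forall>\<xi> \<xi>' \<eta>. wedge C (\<xi> + \<xi>') \<eta> = wedge C \<xi> \<eta> + wedge C \<xi>' \<eta>) \<and>
     (\<forall>\<xi> \<eta> \<eta>'. wedge C \<xi> (\<eta> + \<eta>') = wedge C \<xi> \<eta> + wedge C \<xi> \<eta>') \<and>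
     (\<forall>a \<xi> \<eta>. wedge C (lw C a \<xi>) \<eta> = lv C a (wedge C \<xi> \<eta>)) \<and>
     (\<forall>a \<xi> \<eta>. wedge C (rw C \<xi> a) \<eta> = wedge C \<xi> (lw C a \<eta>)) \<and>
     (\<forall>a \<xi> \<eta>. wedge C \<xi> (rw C \<eta> a) = rv C (wedge C \<xi> \<eta>) a) \<and>
     (\<forall>\<omega>. \<exists>xs. \<omega> = sum_list (map (\<lambda>(\<xi>, \<eta>). wedge C \<xi> \<eta>) xs)) \<and>
     addit (dd1 C) \<and>
     (\<forall>a. dd1 C (dd C a) = 0) \<and>
     (\<forall>a \<xi>. dd1 C (lw C a \<xi>) = wedge C (dd C a) \<xi> + lv C a (dd1 C \<xi>)) \<and>
     (\<forall>a \<xi>. dd1 C (rw C \<xi> a) = rv C (dd1 C \<xi>) a - wedge C \<xi> (dd C a)) \<and>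
     addit (wstar C) \<and> (\<forall>\<xi>. wstar C (wstar C \<xi>) = \<xi>) \<and>
     (\<forall>a \<xi>. wstar C (lw C a \<xi>) = rw C (wstar C \<xi>) (astar C a)) \<and>
     (\<forall>a \<xi>. wstar C (rw C \<xi> a) = lw C (astar C a) (wstar C \<xi>)) \<and>
     (\<forall>a. wstar C (dd C a) = dd C (astar C a)) \<and>
     addit (vstar C) \<and> (\<forall>\<omega>. vstar C (vstar C \<omega>) = \<omega>) \<and>
     (\<forall>a \<omega>. vstar C (lv C a \<omega>) = rv C (vstar C \<omega>) (astar C a)) \<and>
     (\<forall>a \<omega>. vstar C (rv C \<omega> a) = lv C (astar C a) (vstar C \<omega>)) \<and>
     (\<forall>\<xi> \<eta>. vstar C (wedge C \<xi> \<eta>) = - wedge C (wstar C \<eta>) (wstar C \<xi>)) \<and>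
     (\<forall>\<xi>. vstar C (dd1 C \<xi>) = dd1 C (wstar C \<xi>))"

(* Integrable almost complex structure: bimodule decompositions
   Omega^1 = Omega^{1,0} + Omega^{0,1}, Omega^2 = Omega^{2,0}+Omega^{1,1}+Omega^{0,2}
   via projections; wedge respects bidegree; * exchanges bidegrees;
   d = del + delbar with del of type (1,0), delbar of type (0,1);
   del^2 = delbar^2 = 0. *)
definition integrable_cplx :: "('a::ring_1, 'w::ab_group_add, 'v::ab_group_add) calc \<Rightarrow> bool" where
  "integrable_cplx C \<longleftrightarrow>
     bimod_map (lw C) (rw C) (p10 C) \<and> bimod_map (lw C) (rw C) (p01 C) \<and>
     bimod_map (lv C) (rv C) (q20 C) \<and> bimod_map (lv C) (rv C) (q11 C) \<and>
     bimod_map (lv C) (rv C) (q02 C) \<and>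
     (\<forall>\<xi>. p10 C \<xi> + p01 C \<xi> = \<xi>) \<and>
     (\<forall>\<xi>. p10 C (p10 C \<xi>) = p10 C \<xi>) \<and> (\<forall>\<xi>. p01 C (p01 C \<xi>) = p01 C \<xi>) \<and>
     (\<forall>\<xi>. p10 C (p01 C \<xi>) = 0) \<and> (\<forall>\<xi>. p01 C (p10 C \<xi>) = 0) \<and>
     (\<forall>\<omega>. q20 C \<omega> + q11 C \<omega> + q02 C \<omega> = \<omega>) \<and>
     (\<forall>\<omega>. q20 C (q20 C \<omega>) = q20 C \<omega>) \<and> (\<forall>\<omega>. q11 C (q11 C \<omega>) = q11 C \<omega>) \<and>
     (\<forall>\<omega>. q02 C (q02 C \<omega>) = q02 C \<omega>) \<and>
     (\<forall>\<omega>. q20 C (q11 C \<omega>) = 0) \<and> (\<forall>\<omega>. q20 C (q02 C \<omega>) = 0) \<and>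
     (\<forall>\<omega>. q11 C (q20 C \<omega>) = 0) \<and> (\<forall>\<omega>. q11 C (q02 C \<omega>) = 0) \<and>
     (\<forall>\<omega>. q02 C (q20 C \<omega>) = 0) \<and> (\<forall>\<omega>. q02 C (q11 C \<omega>) = 0) \<and>
     (\<forall>\<xi> \<eta>. q20 C (wedge C (p10 C \<xi>) (p10 C \<eta>)) = wedge C (p10 C \<xi>) (p10 C \<eta>)) \<and>
     (\<forall>\<xi> \<eta>. q11 C (wedge C (p10 C \<xi>) (p01 C \<eta>)) = wedge C (p10 C \<xi>) (p01 C \<eta>)) \<and>
     (\<forall>\<xi> \<eta>. q11 C (wedge C (p01 C \<xi>) (p10 C \<eta>)) = wedge C (p01 C \<xi>) (p10 C \<eta>)) \<and>
     (\<forall>\<xi> \<eta>. q02 C (wedge C (p01 C \<xi>) (p01 C \<eta>)) = wedge C (p01 C \<xi>) (p01 C \<eta>)) \<and>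
     (\<forall>\<xi>. wstar C (p10 C \<xi>) = p01 C (wstar C \<xi>)) \<and>
     (\<forall>\<omega>. vstar C (q20 C \<omega>) = q02 C (vstar C \<omega>)) \<and>
     (\<forall>\<omega>. vstar C (q11 C \<omega>) = q11 C (vstar C \<omega>)) \<and>
     (\<forall>\<xi>. q02 C (dd1 C (p10 C \<xi>)) = 0) \<and>
     (\<forall>\<xi>. q20 C (dd1 C (p01 C \<xi>)) = 0) \<and>
     (\<forall>a. q20 C (dd1 C (p10 C (dd C a))) = 0) \<and>
     (\<forall>a. q02 C (dd1 C (p01 C (dd C a))) = 0)"

definition del :: "('a, 'w, 'v) calc \<Rightarrow> 'a \<Rightarrow> 'w" where
  "del C a = p10 C (dd C a)"
definition delbar :: "('a, 'w, 'v) calc \<Rightarrow> 'a \<Rightarrow> 'w" where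
  "delbar C a = p01 C (dd C a)"
definition delbar1 :: "('a, 'w, 'v) calc \<Rightarrow> 'w \<Rightarrow> 'v" where
  "delbar1 C \<xi> = q02 C (dd1 C \<xi>)"

(* Finitely generated projective left module E (type 'e) with left    *)
(* action lE, given with a dual basis e^i = eb i, e_i = ec i, i < n:   *)
(* e = sum_i e_i(e) e^i.                                              *)

definition fgp_dual_basis ::
  "('a::ring_1 \<Rightarrow> 'e::ab_group_add \<Rightarrow> 'e) \<Rightarrow> nat \<Rightarrow> (nat \<Rightarrow> 'e) \<Rightarrow> (nat \<Rightarrow> 'e \<Rightarrow> 'a) \<Rightarrow> bool" where
  "fgp_dual_basis lE n eb ec \<longleftrightarrow> leftmod lE \<and>
     (\<forall>i. addit (ec i) \<and> (\<forall>a e. ec i (lE a e) = a * ec i e)) \<and>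
     (\<forall>e. e = (\<Sum>i<n. lE (ec i e) (eb i)))"

definition Pmat :: "(nat \<Rightarrow> 'e) \<Rightarrow> (nat \<Rightarrow> 'e \<Rightarrow> 'a) \<Rightarrow> nat \<Rightarrow> nat \<Rightarrow> 'a" where
  "Pmat eb ec j i = ec i (eb j)"

(* Omega^1 (x)_A E is identified with row vectors xi = (xi_1..xi_n) of 1-forms
   with xi P = xi, via  sum_j xi_j (x) e^j  <->  xi;
   a pure tensor kappa (x) e corresponds to (kappa . e_i(e))_i. *)
definition in_OE :: "('a::ring_1, 'w::ab_group_add, 'v) calc \<Rightarrow> nat \<Rightarrow> (nat \<Rightarrow> 'e) \<Rightarrow> (nat \<Rightarrow> 'e \<Rightarrow> 'a)
     \<Rightarrow> (nat \<Rightarrow> 'w) \<Rightarrow> bool" where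
  "in_OE C n eb ec \<xi> \<longleftrightarrow> (\<forall>j\<ge>n. \<xi> j = 0) \<and>
     (\<forall>k<n. (\<Sum>j<n. rw C (\<xi> j) (Pmat eb ec j k)) = \<xi> k)"

definition tens :: "('a, 'w::zero, 'v) calc \<Rightarrow> nat \<Rightarrow> (nat \<Rightarrow> 'e \<Rightarrow> 'a) \<Rightarrow> 'w \<Rightarrow> 'e \<Rightarrow> nat \<Rightarrow> 'w" where
  "tens C n ec \<kappa> e = (\<lambda>i. if i < n then rw C \<kappa> (ec i e) else 0)"

definition left_connection ::
  "('a::ring_1, 'w::ab_group_add, 'v) calc \<Rightarrow> ('a \<Rightarrow> 'e::ab_group_add \<Rightarrow> 'e) \<Rightarrow> nat \<Rightarrow> (nat \<Rightarrow> 'e)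
     \<Rightarrow> (nat \<Rightarrow> 'e \<Rightarrow> 'a) \<Rightarrow> ('e \<Rightarrow> nat \<Rightarrow> 'w) \<Rightarrow> bool" where
  "left_connection C lE n eb ec nab \<longleftrightarrow>
     (\<forall>e. in_OE C n eb ec (nab e)) \<and> (\<forall>e f i. nab (e + f) i = nab e i + nab f i) \<and>
     (\<forall>a e i. nab (lE a e) i = tens C n ec (dd C a) e i + lw C a (nab e i))"

(* holomorphic structure delbar_E : E -> Omega^{0,1} (x)_A E, with
   (delbar (x) id - id wedge delbar_E) delbar_E = 0 *)
definition holomorphic_structure ::
  "('a::ring_1, 'w::ab_group_add, 'v::ab_group_add) calc \<Rightarrow> ('a \<Rightarrow> 'e::ab_group_add \<Rightarrow> 'e) \<Rightarrow> nat
     \<Rightarrow> (nat \<Rightarrow> 'e) \<Rightarrow> (nat \<Rightarrow> 'e \<Rightarrow> 'a) \<Rightarrow> ('e \<Rightarrow> nat \<Rightarrow> 'w) \<Rightarrow> bool" where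
  "holomorphic_structure C lE n eb ec dbE \<longleftrightarrow>
     (\<forall>e. in_OE C n eb ec (dbE e)) \<and> (\<forall>e i. p01 C (dbE e i) = dbE e i) \<and> (\<forall>e f i. dbE (e + f) i = dbE e i + dbE f i) \<and>
     (\<forall>a e i. dbE (lE a e) i = tens C n ec (delbar C a) e i + lw C a (dbE e i)) \<and>
     (\<forall>e. \<forall>k<n. (\<Sum>j<n. rv C (delbar1 C (dbE e j)) (Pmat eb ec j k)
                        - wedge C (dbE e j) (dbE (eb j) k)) = 0)"

(* hermitian metric <e, bar f> = met e f, nondegenerate:
   G : bar E -> E^o, G(bar f) = <_, bar f>, is bijective *)
definition hermitian_metric ::
  "('a::ring_1 \<Rightarrow> 'a) \<Rightarrow> ('a \<Rightarrow> 'e::ab_group_add \<Rightarrow> 'e) \<Rightarrow> ('e \<Rightarrow> 'e \<Rightarrow> 'a) \<Rightarrow> bool" where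
  "hermitian_metric s lE met \<longleftrightarrow>
     (\<forall>e e' f. met (e + e') f = met e f + met e' f) \<and>
     (\<forall>e f f'. met e (f + f') = met e f + met e f') \<and>
     (\<forall>a e f. met (lE a e) f = a * met e f) \<and>
     (\<forall>a e f. met e (lE a f) = met e f * s a) \<and>
     (\<forall>e f. s (met e f) = met f e) \<and>
     (\<forall>\<phi>. addit \<phi> \<and> (\<forall>a e. \<phi> (lE a e) = a * \<phi> e) \<longrightarrow> (\<exists>!f. \<forall>e. met e f = \<phi> e))"

definition gup :: "(nat \<Rightarrow> 'e) \<Rightarrow> ('e \<Rightarrow> 'e \<Rightarrow> 'a) \<Rightarrow> nat \<Rightarrow> nat \<Rightarrow> 'a" where
  "gup eb met i j = met (eb i) (eb j)"

(* g_bullet: G^{-1}(e_i) = bar(sum_j g_{ij} e^j), normalised by g_{ij} P_{jk} = g_{ik} *)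
definition is_glow ::
  "('a::ring_1 \<Rightarrow> 'e::ab_group_add \<Rightarrow> 'e) \<Rightarrow> nat \<Rightarrow> (nat \<Rightarrow> 'e) \<Rightarrow> (nat \<Rightarrow> 'e \<Rightarrow> 'a) \<Rightarrow> ('e \<Rightarrow> 'e \<Rightarrow> 'a)
     \<Rightarrow> (nat \<Rightarrow> nat \<Rightarrow> 'a) \<Rightarrow> bool" where
  "is_glow lE n eb ec met gl \<longleftrightarrow>
     (\<forall>i<n. \<forall>e. met e (\<Sum>j<n. lE (gl i j) (eb j)) = ec i e) \<and>
     (\<forall>i<n. \<forall>k<n. (\<Sum>j<n. gl i j * Pmat eb ec j k) = gl i k)"

definition preserves_metric ::
  "('a::ring_1, 'w::ab_group_add, 'v) calc \<Rightarrow> nat \<Rightarrow> (nat \<Rightarrow> 'e) \<Rightarrow> ('e \<Rightarrow> 'e \<Rightarrow> 'a)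
     \<Rightarrow> ('e \<Rightarrow> nat \<Rightarrow> 'w) \<Rightarrow> bool" where
  "preserves_metric C n eb met nab \<longleftrightarrow>
     (\<forall>e f. dd C (met e f) = (\<Sum>i<n. rw C (nab e i) (met (eb i) f))
                           + (\<Sum>j<n. lw C (met e (eb j)) (wstar C (nab f j))))"

definition chern_connection ::
  "('a::ring_1, 'w::ab_group_add, 'v) calc \<Rightarrow> ('a \<Rightarrow> 'e::ab_group_add \<Rightarrow> 'e) \<Rightarrow> nat \<Rightarrow> (nat \<Rightarrow> 'e)
     \<Rightarrow> (nat \<Rightarrow> 'e \<Rightarrow> 'a) \<Rightarrow> ('e \<Rightarrow> 'e \<Rightarrow> 'a) \<Rightarrow> ('e \<Rightarrow> nat \<Rightarrow> 'w) \<Rightarrow> ('e \<Rightarrow> nat \<Rightarrow> 'w) \<Rightarrow> bool" where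
  "chern_connection C lE n eb ec met dbE nab \<longleftrightarrow>
     left_connection C lE n eb ec nab \<and> preserves_metric C n eb met nab \<and>
     (\<forall>e i. p01 C (nab e i) = dbE e i)"

(* Christoffel symbols: Gamma^i_k = -(id (x) ev)(nabla e^i (x) e_k) *)
definition christoffel :: "(nat \<Rightarrow> 'e) \<Rightarrow> ('e \<Rightarrow> nat \<Rightarrow> 'w::group_add) \<Rightarrow> nat \<Rightarrow> nat \<Rightarrow> 'w" where
  "christoffel eb nab i k = - nab (eb i) k"

end

theory Submission
  imports Defs
begin

text \<open>
  Metric compatibility, split into bidegrees, leaves no freedom: the \<open>(0,1)\<close>-part of
  \<open>\<nabla>\<^sub>E\<close> is prescribed by the holomorphic structure, so the \<open>(1,0)\<close>-part of the
  compatibility identity for \<open>d\<langle>e, G\<^sup>-\<^sup>1(e\<^sub>k)\<rangle>\<close> expresses \<open>\<pi>\<^sup>1\<^sup>,\<^sup>0\<nabla>\<^sub>E e\<close> through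
  \<open>\<partial>\<close>, the metric and the holomorphic structure alone. This gives uniqueness and, on basis
  vectors, the formula for \<open>\<Gamma>\<^sub>+\<close>. Conversely, the connection defined by that formula is
  compatible with the metric: the defect \<open>\<Delta>(e,f)\<close> of compatibility is sesquilinear, so it
  suffices to treat basis vectors; it satisfies \<open>\<Delta>(e,f)\<^sup>* = \<Delta>(f,e)\<close>, and its
  \<open>(1,0)\<close>-part vanishes by construction, hence so does its \<open>(0,1)\<close>-part.
\<close>

lemma addit_zero: "addit f \<Longrightarrow> f 0 = 0"
  unfolding addit_def by (metis add_cancel_right_right)

lemma addit_uminus: "addit f \<Longrightarrow> f (- x) = - f x"
proof -
  assume f: "addit f"
  have "f (- x) + f x = f (- x + x)" using f unfolding addit_def by metis
  also have "\<dots> = 0" using addit_zero[OF f] by simp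
  finally show ?thesis by (simp add: eq_neg_iff_add_eq_0)
qed

lemma addit_diff: "addit f \<Longrightarrow> f (x - y) = f x - f y"
  using addit_uminus[of f y] unfolding addit_def by (metis diff_conv_add_uminus)

lemma addit_sum: "addit f \<Longrightarrow> f (\<Sum>x\<in>A. g x) = (\<Sum>x\<in>A. f (g x))"
proof (induct A rule: infinite_finite_induct)
  case (insert x F)
  then show ?case unfolding addit_def by simp
qed (simp_all add: addit_zero)


section \<open>Calculus with an integrable almost complex structure\<close>

locale complex_calculus =
  fixes C :: "('a::ring_1, 'w::ab_group_add, 'v::ab_group_add) calc"
  assumes star_calculus: "star_calculus C"
    and integrable: "integrable_cplx C"
begin

abbreviation "s \<equiv> astar C"
abbreviation "L \<equiv> lw C"
abbreviation "R \<equiv> rw C"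
abbreviation "d \<equiv> dd C"
abbreviation "W \<equiv> wstar C"
abbreviation "p \<equiv> p10 C"
abbreviation "q \<equiv> p01 C"

lemma astar_addit: "addit s"
  using star_calculus unfolding star_calculus_def star_algebra_def addit_def by (elim conjE) iprover
lemma astar_mult [simp]: "s (a * b) = s b * s a"
  using star_calculus unfolding star_calculus_def star_algebra_def by (elim conjE) iprover
lemma astar_astar [simp]: "s (s a) = a"
  using star_calculus unfolding star_calculus_def star_algebra_def by (elim conjE) iprover
lemma astar_add [simp]: "s (a + b) = s a + s b"
  using astar_addit unfolding addit_def by auto
lemma astar_sum [simp]: "s (\<Sum>x\<in>A. f x) = (\<Sum>x\<in>A. s (f x))"
  by (rule addit_sum[OF astar_addit])

lemma bimodule_one_forms: "bimod L R"
  using star_calculus unfolding star_calculus_def by (elim conjE) iprover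

lemma lw_addit: "addit (L a)" and lw_addit_scalar: "addit (\<lambda>a. L a x)"
  and rw_addit: "addit (R x)" and rw_addit_form: "addit (\<lambda>x. R x a)"
  using bimodule_one_forms unfolding bimod_def leftmod_def addit_def by auto

lemma lw_lw [simp]: "L a (L b x) = L (a * b) x"
  and rw_rw [simp]: "R (R x a) b = R x (a * b)"
  and rw_lw [simp]: "R (L a x) b = L a (R x b)"
  using bimodule_one_forms unfolding bimod_def leftmod_def by auto

lemma lw_add [simp]: "L a (x + y) = L a x + L a y" "L (a + b) x = L a x + L b x"
  using lw_addit lw_addit_scalar unfolding addit_def by auto
lemma rw_add [simp]: "R x (a + b) = R x a + R x b" "R (x + y) a = R x a + R y a"
  using rw_addit rw_addit_form unfolding addit_def by auto
lemma lw_zero [simp]: "L a 0 = 0" "L 0 x = 0"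
  using lw_addit lw_addit_scalar addit_zero by fastforce+
lemma rw_zero [simp]: "R x 0 = 0" "R 0 a = 0"
  using rw_addit rw_addit_form addit_zero by fastforce+
lemma lw_uminus [simp]: "L a (- x) = - L a x" "L (- a) x = - L a x"
  using lw_addit lw_addit_scalar addit_uminus by fastforce+
lemma rw_uminus [simp]: "R x (- a) = - R x a" "R (- x) a = - R x a"
  using rw_addit rw_addit_form addit_uminus by fastforce+
lemma lw_diff [simp]: "L a (x - y) = L a x - L a y" "L (a - b) x = L a x - L b x"
  using lw_addit lw_addit_scalar addit_diff by fastforce+
lemma rw_diff [simp]: "R x (a - b) = R x a - R x b" "R (x - y) a = R x a - R y a"
  using rw_addit rw_addit_form addit_diff by fastforce+
lemma lw_sum [simp]:
  "L a (\<Sum>i\<in>A. f i) = (\<Sum>i\<in>A. L a (f i))" "L (\<Sum>i\<in>A. h i) x = (\<Sum>i\<in>A. L (h i) x)"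
  using addit_sum[OF lw_addit] addit_sum[OF lw_addit_scalar] by fastforce+
lemma rw_sum [simp]:
  "R x (\<Sum>i\<in>A. h i) = (\<Sum>i\<in>A. R x (h i))" "R (\<Sum>i\<in>A. f i) a = (\<Sum>i\<in>A. R (f i) a)"
  using addit_sum[OF rw_addit] addit_sum[OF rw_addit_form] by fastforce+

lemma dd_addit: "addit d"
  using star_calculus unfolding star_calculus_def by (elim conjE) iprover
lemma dd_add [simp]: "d (a + b) = d a + d b"
  using dd_addit unfolding addit_def by auto
lemma dd_sum [simp]: "d (\<Sum>x\<in>A. f x) = (\<Sum>x\<in>A. d (f x))"
  by (rule addit_sum[OF dd_addit])
lemma dd_mult [simp]: "d (a * b) = R (d a) b + L a (d b)"
  using star_calculus unfolding star_calculus_def by (elim conjE) iprover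

lemma wstar_addit: "addit W"
  using star_calculus unfolding star_calculus_def by (elim conjE) iprover
lemma wstar_add [simp]: "W (a + b) = W a + W b"
  using wstar_addit unfolding addit_def by auto
lemma wstar_zero [simp]: "W 0 = 0"
  by (rule addit_zero[OF wstar_addit])
lemma wstar_uminus [simp]: "W (- a) = - W a"
  by (rule addit_uminus[OF wstar_addit])
lemma wstar_diff [simp]: "W (a - b) = W a - W b"
  by (rule addit_diff[OF wstar_addit])
lemma wstar_sum [simp]: "W (\<Sum>x\<in>A. f x) = (\<Sum>x\<in>A. W (f x))"
  by (rule addit_sum[OF wstar_addit])

lemma wstar_wstar [simp]: "W (W x) = x"
  and wstar_lw [simp]: "W (L a x) = R (W x) (s a)"
  and wstar_rw [simp]: "W (R x a) = L (s a) (W x)"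
  and wstar_dd [simp]: "W (d a) = d (s a)"
  using star_calculus unfolding star_calculus_def by (elim conjE; iprover)+

lemma p10_map: "bimod_map L R p" and p01_map: "bimod_map L R q"
  using integrable unfolding integrable_cplx_def by (elim conjE; iprover)+

lemma p10_addit: "addit p" and p01_addit: "addit q"
  using p10_map p01_map unfolding bimod_map_def by blast+

lemma p10_add [simp]: "p (a + b) = p a + p b"
  using p10_addit unfolding addit_def by auto
lemma p10_zero [simp]: "p 0 = 0"
  by (rule addit_zero[OF p10_addit])
lemma p10_uminus [simp]: "p (- a) = - p a"
  by (rule addit_uminus[OF p10_addit])
lemma p10_diff [simp]: "p (a - b) = p a - p b"
  by (rule addit_diff[OF p10_addit])
lemma p10_sum [simp]: "p (\<Sum>x\<in>A. f x) = (\<Sum>x\<in>A. p (f x))"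
  by (rule addit_sum[OF p10_addit])
lemma p01_add [simp]: "q (a + b) = q a + q b"
  using p01_addit unfolding addit_def by auto
lemma p01_zero [simp]: "q 0 = 0"
  by (rule addit_zero[OF p01_addit])
lemma p01_uminus [simp]: "q (- a) = - q a"
  by (rule addit_uminus[OF p01_addit])
lemma p01_diff [simp]: "q (a - b) = q a - q b"
  by (rule addit_diff[OF p01_addit])
lemma p01_sum [simp]: "q (\<Sum>x\<in>A. f x) = (\<Sum>x\<in>A. q (f x))"
  by (rule addit_sum[OF p01_addit])

lemma p10_lw [simp]: "p (L a x) = L a (p x)" and p10_rw [simp]: "p (R x a) = R (p x) a"
  and p01_lw [simp]: "q (L a x) = L a (q x)" and p01_rw [simp]: "q (R x a) = R (q x) a"
  using p10_map p01_map unfolding bimod_map_def by blast+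

lemma p10_plus_p01: "p x + q x = x"
  and p10_p10 [simp]: "p (p x) = p x"
  and p01_p01 [simp]: "q (q x) = q x"
  and p10_p01 [simp]: "p (q x) = 0"
  and p01_p10 [simp]: "q (p x) = 0"
  and wstar_p10 [simp]: "W (p x) = q (W x)"
  using integrable unfolding integrable_cplx_def by (elim conjE; iprover)+

lemma wstar_p01 [simp]: "W (q x) = p (W x)"
proof -
  have "W (p (W x)) = q x" by simp
  then show ?thesis by (metis wstar_wstar)
qed

end


section \<open>Hermitian metrics on a projective module with a dual basis\<close>

locale hermitian_module = complex_calculus C
  for C :: "('a::ring_1, 'w::ab_group_add, 'v::ab_group_add) calc" +
  fixes lE :: "'a \<Rightarrow> 'e::ab_group_add \<Rightarrow> 'e"
    and n :: nat and eb :: "nat \<Rightarrow> 'e" and ec :: "nat \<Rightarrow> 'e \<Rightarrow> 'a"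
    and met :: "'e \<Rightarrow> 'e \<Rightarrow> 'a"
  assumes dual_basis: "fgp_dual_basis lE n eb ec"
    and hermitian: "hermitian_metric (astar C) lE met"
begin

abbreviation "P \<equiv> Pmat eb ec"
abbreviation "g \<equiv> gup eb met"

lemma ec_addit: "addit (ec i)"
  and ec_lE [simp]: "ec i (lE a e) = a * ec i e"
  and dual_basis_expand: "e = (\<Sum>i<n. lE (ec i e) (eb i))"
  using dual_basis unfolding fgp_dual_basis_def by (elim conjE; iprover)+

lemma ec_add [simp]: "ec i (a + b) = ec i a + ec i b"
  using ec_addit unfolding addit_def by auto
lemma ec_sum [simp]: "ec i (\<Sum>x\<in>A. f x) = (\<Sum>x\<in>A. ec i (f x))"
  by (rule addit_sum[OF ec_addit])

lemma met_add_left [simp]: "met (e + e') f = met e f + met e' f"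
  and met_add_right [simp]: "met e (f + f') = met e f + met e f'"
  and met_lE_left [simp]: "met (lE a e) f = a * met e f"
  and met_lE_right [simp]: "met e (lE a f) = met e f * s a"
  and astar_met [simp]: "s (met e f) = met f e"
  using hermitian unfolding hermitian_metric_def by (elim conjE; iprover)+

lemma met_sum_left [simp]: "met (\<Sum>x\<in>A. h x) f = (\<Sum>x\<in>A. met (h x) f)"
  using addit_sum[of "\<lambda>e. met e f"] unfolding addit_def by fastforce
lemma met_sum_right [simp]: "met e (\<Sum>x\<in>A. h x) = (\<Sum>x\<in>A. met e (h x))"
  using addit_sum[of "met e"] unfolding addit_def by fastforce

lemma met_represents:
  assumes "addit \<phi>" and "\<And>a e. \<phi> (lE a e) = a * \<phi> e"
  shows "\<exists>f. \<forall>e. met e f = \<phi> e"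
proof -
  have "\<forall>\<phi>. addit \<phi> \<and> (\<forall>a e. \<phi> (lE a e) = a * \<phi> e) \<longrightarrow> (\<exists>!f. \<forall>e. met e f = \<phi> e)"
    using hermitian unfolding hermitian_metric_def by (elim conjE) iprover
  then show ?thesis using assms by blast
qed

lemma Pmat_fold [simp]: "ec k (eb i) = P i k"
  by (simp add: Pmat_def)
lemma gup_fold [simp]: "met (eb i) (eb j) = g i j"
  by (simp add: gup_def)

lemma ec_Pmat_expand: "ec k e = (\<Sum>i<n. ec i e * P i k)"
proof -
  have "ec k e = ec k (\<Sum>i<n. lE (ec i e) (eb i))" by (rule arg_cong[OF dual_basis_expand])
  then show ?thesis by simp
qed

lemma Pmat_idem: "(\<Sum>k<n. P i k * P k l) = P i l"
  using ec_Pmat_expand[of l "eb i"] by simp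

lemma met_expand_left: "met e f = (\<Sum>i<n. ec i e * met (eb i) f)"
proof -
  have "met e f = met (\<Sum>i<n. lE (ec i e) (eb i)) f" by (rule arg_cong[OF dual_basis_expand])
  then show ?thesis by simp
qed

lemma met_expand_right: "met e f = (\<Sum>l<n. met e (eb l) * s (ec l f))"
proof -
  have "met e f = met e (\<Sum>i<n. lE (ec i f) (eb i))" by (rule arg_cong[OF dual_basis_expand])
  then show ?thesis by simp
qed

lemma Pmat_gup: "(\<Sum>i<n. P j i * g i l) = g j l"
  using met_expand_left[of "eb j" "eb l"] by simp

lemma astar_gup [simp]: "s (g i j) = g j i"
  using astar_met[of "eb i" "eb j"] by simp

lemma gup_astar_Pmat: "(\<Sum>j<n. g i j * s (P l j)) = g i l"
proof -
  have "s (\<Sum>j<n. g i j * s (P l j)) = g l i"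
    using Pmat_gup[of l i] by simp
  then show ?thesis by (metis astar_astar astar_gup)
qed

lemma is_glow_exists: "\<exists>gl. is_glow lE n eb ec met gl"
proof -
  have "\<forall>i. \<exists>f. \<forall>e. met e f = ec i e"
    using met_represents ec_addit by simp
  then obtain F where F: "\<And>e i. met e (F i) = ec i e" by (metis choice)
  have "is_glow lE n eb ec met (\<lambda>i j. ec j (F i))"
    unfolding is_glow_def
  proof (intro conjI allI impI)
    fix i e
    have "met e (\<Sum>j<n. lE (ec j (F i)) (eb j)) = met e (F i)"
      by (rule arg_cong[OF dual_basis_expand[symmetric]])
    then show "met e (\<Sum>j<n. lE (ec j (F i)) (eb j)) = ec i e" by (simp add: F)
  next
    fix i k
    show "(\<Sum>j<n. ec j (F i) * P j k) = ec k (F i)"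
      by (rule ec_Pmat_expand[symmetric])
  qed
  then show ?thesis by blast
qed

text \<open>\<open>dual_vec gl i\<close> is the vector \<open>\<Sum>\<^sub>j g\<^sub>i\<^sub>j e\<^sup>j\<close> with \<open>G\<^sup>-\<^sup>1(e\<^sub>i)\<close> its conjugate.\<close>

definition dual_vec :: "(nat \<Rightarrow> nat \<Rightarrow> 'a) \<Rightarrow> nat \<Rightarrow> 'e" where
  "dual_vec gl i = (\<Sum>j<n. lE (gl i j) (eb j))"

context
  fixes gl assumes glow: "is_glow lE n eb ec met gl"
begin

lemma met_dual_vec: "i < n \<Longrightarrow> met e (dual_vec gl i) = ec i e"
  using glow unfolding is_glow_def dual_vec_def by blast

lemma glow_Pmat: "i < n \<Longrightarrow> k < n \<Longrightarrow> (\<Sum>j<n. gl i j * P j k) = gl i k"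
  using glow unfolding is_glow_def by blast

lemma glow_herm:
  assumes "i < n" "k < n"
  shows "s (gl i k) = gl k i"
proof -
  have met_dual_vecs: "gl i' k' = met (dual_vec gl i') (dual_vec gl k')" if "i' < n" "k' < n" for i' k'
  proof -
    have "gl i' k' = ec k' (dual_vec gl i')"
      using glow_Pmat[OF that] by (simp add: dual_vec_def)
    then show ?thesis by (simp add: met_dual_vec that)
  qed
  show ?thesis using met_dual_vecs[OF assms] met_dual_vecs[OF assms(2,1)] by simp
qed

lemma gup_glow: "k < n \<Longrightarrow> (\<Sum>l<n. g m l * gl l k) = P m k"
proof -
  assume k: "k < n"
  have "P m k = met (eb m) (dual_vec gl k)" using k by (simp add: met_dual_vec)
  also have "\<dots> = (\<Sum>l<n. g m l * s (gl k l))" by (simp add: dual_vec_def)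
  also have "\<dots> = (\<Sum>l<n. g m l * gl l k)"
    by (rule sum.cong) (simp_all add: glow_herm k)
  finally show ?thesis by simp
qed

lemma glow_gup: "j < n \<Longrightarrow> (\<Sum>l<n. gl j l * g l m) = s (P m j)"
proof -
  assume j: "j < n"
  have "(\<Sum>l<n. gl j l * g l m) = s (met (eb m) (dual_vec gl j))" by (simp add: dual_vec_def)
  also have "\<dots> = s (P m j)" using j by (simp add: met_dual_vec)
  finally show ?thesis .
qed

end

definition metric_defect :: "('e \<Rightarrow> nat \<Rightarrow> 'w) \<Rightarrow> 'e \<Rightarrow> 'e \<Rightarrow> 'w" where
  "metric_defect nab e f = d (met e f)
     - ((\<Sum>i<n. R (nab e i) (met (eb i) f)) + (\<Sum>j<n. L (met e (eb j)) (W (nab f j))))"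

lemma wstar_metric_defect: "W (metric_defect nab e f) = metric_defect nab f e"
  unfolding metric_defect_def by (simp add: add.commute)

context
  fixes nab assumes conn: "left_connection C lE n eb ec nab"
begin

lemma connection_add: "nab (e + f) i = nab e i + nab f i"
  and connection_lE: "nab (lE a e) i = tens C n ec (d a) e i + L a (nab e i)"
  using conn unfolding left_connection_def by blast+

lemma connection_outside: "n \<le> j \<Longrightarrow> nab e j = 0"
  and connection_Pmat: "k < n \<Longrightarrow> (\<Sum>j<n. R (nab e j) (P j k)) = nab e k"
  using conn unfolding left_connection_def in_OE_def by blast+

lemma metric_defect_addit_left: "addit (\<lambda>e. metric_defect nab e f)"
  and metric_defect_addit_right: "addit (metric_defect nab e)"
  unfolding addit_def metric_defect_def by (simp_all add: connection_add sum.distrib algebra_simps)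

lemma metric_defect_lE_left: "metric_defect nab (lE a e) f = L a (metric_defect nab e f)"
proof -
  have "(\<Sum>i<n. R (nab (lE a e) i) (met (eb i) f))
      = R (d a) (\<Sum>i<n. ec i e * met (eb i) f) + L a (\<Sum>i<n. R (nab e i) (met (eb i) f))"
    by (simp add: connection_lE tens_def sum.distrib)
  also have "(\<Sum>i<n. ec i e * met (eb i) f) = met e f" by (rule met_expand_left[symmetric])
  finally show ?thesis unfolding metric_defect_def by (simp add: algebra_simps)
qed

lemma metric_defect_lE_right: "metric_defect nab e (lE a f) = R (metric_defect nab e f) (s a)"
proof -
  have "(\<Sum>j<n. L (met e (eb j)) (W (nab (lE a f) j)))
      = L (\<Sum>j<n. met e (eb j) * s (ec j f)) (d (s a)) + R (\<Sum>j<n. L (met e (eb j)) (W (nab f j))) (s a)"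
    by (simp add: connection_lE tens_def sum.distrib)
  also have "(\<Sum>j<n. met e (eb j) * s (ec j f)) = met e f" by (rule met_expand_right[symmetric])
  finally show ?thesis unfolding metric_defect_def by (simp add: algebra_simps)
qed

lemma metric_defect_expand:
  "metric_defect nab e f = (\<Sum>i<n. \<Sum>l<n. L (ec i e) (R (metric_defect nab (eb i) (eb l)) (s (ec l f))))"
proof -
  have "metric_defect nab e f = metric_defect nab (\<Sum>i<n. lE (ec i e) (eb i)) f"
    by (rule arg_cong[OF dual_basis_expand])
  also have "\<dots> = (\<Sum>i<n. L (ec i e) (metric_defect nab (eb i) f))"
    by (simp add: addit_sum[OF metric_defect_addit_left] metric_defect_lE_left)
  also have "\<dots> = (\<Sum>i<n. L (ec i e) (metric_defect nab (eb i) (\<Sum>l<n. lE (ec l f) (eb l))))"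
    by (simp flip: dual_basis_expand)
  also have "\<dots> = (\<Sum>i<n. \<Sum>l<n. L (ec i e) (R (metric_defect nab (eb i) (eb l)) (s (ec l f))))"
    by (simp add: addit_sum[OF metric_defect_addit_right] metric_defect_lE_right)
  finally show ?thesis .
qed

lemma preserves_metric_if_p10_basis:
  assumes p10_defect: "\<And>i l. i < n \<Longrightarrow> l < n \<Longrightarrow> p (metric_defect nab (eb i) (eb l)) = 0"
  shows "preserves_metric C n eb met nab"
proof -
  have basis: "metric_defect nab (eb i) (eb l) = 0" if "i < n" "l < n" for i l
  proof -
    have "q (metric_defect nab (eb i) (eb l)) = W (p (metric_defect nab (eb l) (eb i)))"
      by (simp only: wstar_metric_defect[of nab "eb l" "eb i", symmetric] wstar_p10)
    then have "q (metric_defect nab (eb i) (eb l)) = 0"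
      using p10_defect that by simp
    then show ?thesis
      using p10_plus_p01[of "metric_defect nab (eb i) (eb l)"] p10_defect that by simp
  qed
  have "metric_defect nab e f = 0" for e f
    by (subst metric_defect_expand) (simp add: basis)
  then show ?thesis
    unfolding preserves_metric_def metric_defect_def by (simp only: right_minus_eq) blast
qed

end

end


section \<open>The Chern connection\<close>

locale chern_setting = hermitian_module C lE n eb ec met
  for C :: "('a::ring_1, 'w::ab_group_add, 'v::ab_group_add) calc"
    and lE :: "'a \<Rightarrow> 'e::ab_group_add \<Rightarrow> 'e" and n eb ec met +
  fixes dbE :: "'e \<Rightarrow> nat \<Rightarrow> 'w"
  assumes holomorphic: "holomorphic_structure C lE n eb ec dbE"
begin

lemma dbE_p01 [simp]: "q (dbE e i) = dbE e i"
  and dbE_outside: "n \<le> j \<Longrightarrow> dbE e j = 0"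
  and dbE_Pmat: "k < n \<Longrightarrow> (\<Sum>j<n. R (dbE e j) (P j k)) = dbE e k"
  and dbE_add: "dbE (e + f) i = dbE e i + dbE f i"
  and dbE_lE: "dbE (lE a e) i = tens C n ec (delbar C a) e i + L a (dbE e i)"
  using holomorphic unfolding holomorphic_structure_def in_OE_def by (elim conjE; iprover)+

lemma p10_dbE [simp]: "p (dbE e j) = 0"
  by (metis dbE_p01 p10_p01)

lemma p10_wstar_dbE [simp]: "p (W (dbE e j)) = W (dbE e j)"
  by (metis dbE_p01 wstar_p01)

lemma p01_wstar_dbE [simp]: "q (W (dbE e j)) = 0"
  by (metis p10_wstar_dbE p01_p10)

lemma dbE_sum: "dbE (\<Sum>r\<in>A. h r) j = (\<Sum>r\<in>A. dbE (h r) j)"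
  using addit_sum[of "\<lambda>e. dbE e j"] unfolding addit_def by (simp add: dbE_add)

lemma wstar_dbE_basis:
  assumes "j < n"
  shows "W (dbE (eb l) j) = (\<Sum>r<n. L (s (P r j)) (p (d (s (P l r)))))
                           + (\<Sum>r<n. R (W (dbE (eb r) j)) (s (P l r)))"
proof -
  have "dbE (eb l) j = dbE (\<Sum>r<n. lE (ec r (eb l)) (eb r)) j"
    by (rule arg_cong[OF dual_basis_expand])
  also have "\<dots> = (\<Sum>r<n. R (q (d (P l r))) (P r j) + L (P l r) (dbE (eb r) j))"
    using assms by (simp add: dbE_sum dbE_lE tens_def delbar_def)
  finally show ?thesis by (simp add: sum.distrib)
qed

lemma sum_del_gup_astar_Pmat:
  "(\<Sum>r<n. R (p (d (g i r))) (s (P l r))) = p (d (g i l)) - (\<Sum>r<n. L (g i r) (p (d (s (P l r)))))"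
proof -
  have "p (d (g i l)) = p (d (\<Sum>r<n. g i r * s (P l r)))" by (simp only: gup_astar_Pmat)
  then show ?thesis by (simp add: sum.distrib)
qed

lemma gup_wstar_dbE_expand:
  "(\<Sum>j<n. L (g i j) (W (dbE (eb l) j))) = (\<Sum>r<n. L (g i r) (p (d (s (P l r)))))
     + (\<Sum>r<n. \<Sum>j<n. L (g i j) (R (W (dbE (eb r) j)) (s (P l r))))"
proof -
  have "(\<Sum>j<n. L (g i j) (W (dbE (eb l) j)))
      = (\<Sum>j<n. \<Sum>r<n. L (g i j * s (P r j)) (p (d (s (P l r)))))
        + (\<Sum>j<n. \<Sum>r<n. L (g i j) (R (W (dbE (eb r) j)) (s (P l r))))"
    by (simp add: wstar_dbE_basis[of _ l] sum.distrib)
  also have "(\<Sum>j<n. \<Sum>r<n. L (g i j * s (P r j)) (p (d (s (P l r)))))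
           = (\<Sum>r<n. L (\<Sum>j<n. g i j * s (P r j)) (p (d (s (P l r)))))"
    by (subst sum.swap) simp
  also have "\<dots> = (\<Sum>r<n. L (g i r) (p (d (s (P l r)))))" by (simp only: gup_astar_Pmat)
  also have "(\<Sum>j<n. \<Sum>r<n. L (g i j) (R (W (dbE (eb r) j)) (s (P l r))))
           = (\<Sum>r<n. \<Sum>j<n. L (g i j) (R (W (dbE (eb r) j)) (s (P l r))))"
    by (rule sum.swap)
  finally show ?thesis .
qed

context
  fixes nab assumes chern: "chern_connection C lE n eb ec met dbE nab"
begin

lemma chern_left_connection: "left_connection C lE n eb ec nab"
  and chern_preserves_metric: "preserves_metric C n eb met nab"
  and chern_p01: "q (nab e i) = dbE e i"
  using chern unfolding chern_connection_def by blast+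

lemma chern_split: "nab e i = p (nab e i) + dbE e i"
  by (metis chern_p01 p10_plus_p01)

lemma p10_wstar_chern: "p (W (nab f j)) = W (dbE f j)"
  by (metis chern_p01 wstar_p01)

text \<open>The \<open>(1,0)\<close>-part of metric compatibility, tested against \<open>G\<^sup>-\<^sup>1(e\<^sub>k)\<close>.\<close>

lemma chern_p10_eq:
  assumes glow: "is_glow lE n eb ec met gl" and k: "k < n"
  shows "p (nab e k) = p (d (met e (dual_vec gl k)))
                      - (\<Sum>j<n. L (met e (eb j)) (W (dbE (dual_vec gl k) j)))"
proof -
  have "p (d (met e (dual_vec gl k))) = (\<Sum>i<n. R (p (nab e i)) (met (eb i) (dual_vec gl k)))
        + (\<Sum>j<n. L (met e (eb j)) (W (dbE (dual_vec gl k) j)))"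
    using chern_preserves_metric unfolding preserves_metric_def by (simp add: p10_wstar_chern)
  also have "(\<Sum>i<n. R (p (nab e i)) (met (eb i) (dual_vec gl k))) = (\<Sum>i<n. R (p (nab e i)) (P i k))"
    using k by (simp add: met_dual_vec[OF glow])
  also have "\<dots> = p (nab e k)"
    using arg_cong[OF connection_Pmat[OF chern_left_connection k, of e], of p] by simp
  finally show ?thesis by simp
qed

lemma chern_p10_basis:
  assumes glow: "is_glow lE n eb ec met gl" and k: "k < n"
  shows "p (nab (eb i) k) = (\<Sum>l<n. R (del C (g i l)) (gl l k))
     - (\<Sum>l<n. \<Sum>j<n. R (L (g i j) (W (dbE (eb l) j))) (gl l k))"
proof -
  have del_gup: "del C (g i l) = (\<Sum>m<n. R (p (nab (eb i) m)) (g m l))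
                                + (\<Sum>j<n. L (g i j) (W (dbE (eb l) j)))" for l
    using arg_cong[OF chern_preserves_metric[unfolded preserves_metric_def, rule_format, of "eb i" "eb l"], of p]
    by (simp add: p10_wstar_chern del_def)
  have "(\<Sum>l<n. R (del C (g i l)) (gl l k)) =
      (\<Sum>l<n. \<Sum>m<n. R (p (nab (eb i) m)) (g m l * gl l k))
      + (\<Sum>l<n. \<Sum>j<n. R (L (g i j) (W (dbE (eb l) j))) (gl l k))"
    by (simp add: del_gup sum.distrib)
  also have "(\<Sum>l<n. \<Sum>m<n. R (p (nab (eb i) m)) (g m l * gl l k))
           = (\<Sum>m<n. \<Sum>l<n. R (p (nab (eb i) m)) (g m l * gl l k))"
    by (rule sum.swap)
  also have "\<dots> = (\<Sum>m<n. R (p (nab (eb i) m)) (P m k))"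
    by (simp add: gup_glow[OF glow k, symmetric])
  also have "\<dots> = p (nab (eb i) k)"
    using arg_cong[OF connection_Pmat[OF chern_left_connection k, of "eb i"], of p] by simp
  finally show ?thesis by simp
qed

end

lemma chern_connection_unique:
  assumes chern1: "chern_connection C lE n eb ec met dbE nab1"
    and chern2: "chern_connection C lE n eb ec met dbE nab2"
  shows "nab1 = nab2"
proof (intro ext)
  fix e k
  obtain gl where glow: "is_glow lE n eb ec met gl" using is_glow_exists by blast
  show "nab1 e k = nab2 e k"
  proof (cases "k < n")
    case True
    then have "p (nab1 e k) = p (nab2 e k)"
      using chern_p10_eq[OF chern1 glow] chern_p10_eq[OF chern2 glow] by simp
    then show ?thesis using chern_split[OF chern1] chern_split[OF chern2] by metis
  next
    case False
    then show ?thesis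
      using connection_outside[OF chern_left_connection[OF chern1]]
        connection_outside[OF chern_left_connection[OF chern2]] by simp
  qed
qed

text \<open>The candidate connection, read off from the formula of the theorem: \<open>neg_Gamma10 gl\<close> is
  \<open>-\<Gamma>\<^sub>+ = \<partial>g\<^sup>\<bullet> g\<^sub>\<bullet> + g\<^sup>\<bullet> \<Gamma>\<^sub>-\<^sup>* g\<^sub>\<bullet>\<close>, where \<open>\<Gamma>\<^sub>-\<close> is minus the matrix of \<open>dbE\<close> on the
  basis, and \<open>neg_Gamma10_gup\<close> is \<open>-\<Gamma>\<^sub>+ g\<^sup>\<bullet>\<close>.\<close>

definition neg_Gamma10_gup :: "nat \<Rightarrow> nat \<Rightarrow> 'w" where
  "neg_Gamma10_gup i l = p (d (g i l)) - (\<Sum>j<n. L (g i j) (W (dbE (eb l) j)))"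

definition neg_Gamma10 :: "(nat \<Rightarrow> nat \<Rightarrow> 'a) \<Rightarrow> nat \<Rightarrow> nat \<Rightarrow> 'w" where
  "neg_Gamma10 gl i k = (\<Sum>l<n. R (neg_Gamma10_gup i l) (gl l k))"

definition chern_nabla :: "(nat \<Rightarrow> nat \<Rightarrow> 'a) \<Rightarrow> 'e \<Rightarrow> nat \<Rightarrow> 'w" where
  "chern_nabla gl e k = (if k < n then dbE e k + (\<Sum>i<n. R (p (d (ec i e))) (P i k))
                                      + (\<Sum>i<n. L (ec i e) (neg_Gamma10 gl i k)) else 0)"

lemma p01_neg_Gamma10_gup [simp]: "q (neg_Gamma10_gup i l) = 0"
  and p10_neg_Gamma10_gup [simp]: "p (neg_Gamma10_gup i l) = neg_Gamma10_gup i l"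
  and p01_neg_Gamma10 [simp]: "q (neg_Gamma10 gl i k) = 0"
  and p10_neg_Gamma10 [simp]: "p (neg_Gamma10 gl i k) = neg_Gamma10 gl i k"
  by (simp_all add: neg_Gamma10_gup_def neg_Gamma10_def)

lemma chern_nabla_p01: "q (chern_nabla gl e k) = dbE e k"
  by (simp add: chern_nabla_def dbE_outside)

lemma chern_nabla_add: "chern_nabla gl (e + f) i = chern_nabla gl e i + chern_nabla gl f i"
  unfolding chern_nabla_def by (simp add: dbE_add sum.distrib algebra_simps)

lemma chern_nabla_lE: "chern_nabla gl (lE a e) i = tens C n ec (d a) e i + L a (chern_nabla gl e i)"
proof (cases "i < n")
  case True
  have "(\<Sum>r<n. R (p (d (ec r (lE a e)))) (P r i))
      = R (p (d a)) (\<Sum>r<n. ec r e * P r i) + L a (\<Sum>r<n. R (p (d (ec r e))) (P r i))"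
    by (simp add: sum.distrib)
  also have "(\<Sum>r<n. ec r e * P r i) = ec i e" by (rule ec_Pmat_expand[symmetric])
  finally have del_coord: "(\<Sum>r<n. R (p (d (ec r (lE a e)))) (P r i))
                        = R (p (d a)) (ec i e) + L a (\<Sum>r<n. R (p (d (ec r e))) (P r i))" .
  have "R (d a) (ec i e) = R (q (d a)) (ec i e) + R (p (d a)) (ec i e)"
    by (metis p10_plus_p01 rw_add(2) add.commute)
  with True show ?thesis unfolding chern_nabla_def
    by (simp only: if_True del_coord dbE_lE tens_def delbar_def) (simp add: algebra_simps)
next
  case False
  then show ?thesis by (simp add: chern_nabla_def tens_def)
qed

lemma Pmat_neg_Gamma10_gup:
  "(\<Sum>r<n. L (P i r) (neg_Gamma10_gup r l)) = neg_Gamma10_gup i l - (\<Sum>r<n. R (p (d (P i r))) (g r l))"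
proof -
  have del_gup: "p (d (g i l)) = (\<Sum>r<n. R (p (d (P i r))) (g r l)) + (\<Sum>r<n. L (P i r) (p (d (g r l))))"
  proof -
    have "p (d (g i l)) = p (d (\<Sum>r<n. P i r * g r l))" by (simp add: Pmat_gup)
    then show ?thesis by (simp add: sum.distrib)
  qed
  have "(\<Sum>r<n. L (P i r) (\<Sum>j<n. L (g r j) (W (dbE (eb l) j))))
      = (\<Sum>j<n. L (\<Sum>r<n. P i r * g r j) (W (dbE (eb l) j)))"
    by (simp, subst sum.swap, simp)
  also have "\<dots> = (\<Sum>j<n. L (g i j) (W (dbE (eb l) j)))" by (simp add: Pmat_gup)
  finally have twist: "(\<Sum>r<n. L (P i r) (\<Sum>j<n. L (g r j) (W (dbE (eb l) j))))
                     = (\<Sum>j<n. L (g i j) (W (dbE (eb l) j)))" .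
  show ?thesis
    unfolding neg_Gamma10_gup_def using del_gup twist by (simp add: sum_subtractf algebra_simps)
qed

context
  fixes gl assumes glow: "is_glow lE n eb ec met gl"
begin

lemma neg_Gamma10_Pmat: "k < n \<Longrightarrow> (\<Sum>j<n. R (neg_Gamma10 gl i j) (P j k)) = neg_Gamma10 gl i k"
proof -
  assume k: "k < n"
  have "(\<Sum>j<n. R (neg_Gamma10 gl i j) (P j k))
      = (\<Sum>j<n. \<Sum>l<n. R (neg_Gamma10_gup i l) (gl l j * P j k))"
    unfolding neg_Gamma10_def by simp
  also have "\<dots> = (\<Sum>l<n. R (neg_Gamma10_gup i l) (\<Sum>j<n. gl l j * P j k))"
    by (subst sum.swap) simp
  also have "\<dots> = neg_Gamma10 gl i k"
    unfolding neg_Gamma10_def by (rule sum.cong) (simp_all add: glow_Pmat[OF glow] k)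
  finally show ?thesis .
qed

lemma chern_nabla_Pmat: "k < n \<Longrightarrow> (\<Sum>j<n. R (chern_nabla gl e j) (P j k)) = chern_nabla gl e k"
proof -
  assume k: "k < n"
  have "(\<Sum>j<n. R (chern_nabla gl e j) (P j k))
      = (\<Sum>j<n. R (dbE e j) (P j k)) + (\<Sum>j<n. \<Sum>i<n. R (p (d (ec i e))) (P i j * P j k))
        + (\<Sum>j<n. \<Sum>i<n. L (ec i e) (R (neg_Gamma10 gl i j) (P j k)))"
    by (simp add: chern_nabla_def sum.distrib)
  also have "(\<Sum>j<n. \<Sum>i<n. R (p (d (ec i e))) (P i j * P j k)) = (\<Sum>i<n. R (p (d (ec i e))) (P i k))"
    by (subst sum.swap) (simp add: Pmat_idem flip: rw_sum)
  also have "(\<Sum>j<n. \<Sum>i<n. L (ec i e) (R (neg_Gamma10 gl i j) (P j k)))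
           = (\<Sum>i<n. L (ec i e) (neg_Gamma10 gl i k))"
    by (subst sum.swap) (simp add: neg_Gamma10_Pmat k flip: lw_sum)
  finally show ?thesis using k by (simp add: dbE_Pmat chern_nabla_def)
qed

lemma chern_nabla_left_connection: "left_connection C lE n eb ec (chern_nabla gl)"
  unfolding left_connection_def in_OE_def
  using chern_nabla_Pmat chern_nabla_add chern_nabla_lE by (simp add: chern_nabla_def)

lemma chern_nabla_basis: "m < n \<Longrightarrow> chern_nabla gl (eb i) m = dbE (eb i) m + neg_Gamma10 gl i m"
proof -
  assume m: "m < n"
  have "(\<Sum>r<n. L (P i r) (neg_Gamma10 gl r m))
      = (\<Sum>l<n. R (\<Sum>r<n. L (P i r) (neg_Gamma10_gup r l)) (gl l m))"
    unfolding neg_Gamma10_def by (simp, subst sum.swap, simp)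
  also have "\<dots> = neg_Gamma10 gl i m - (\<Sum>l<n. \<Sum>r<n. R (p (d (P i r))) (g r l * gl l m))"
    by (simp add: Pmat_neg_Gamma10_gup sum_subtractf neg_Gamma10_def)
  also have "(\<Sum>l<n. \<Sum>r<n. R (p (d (P i r))) (g r l * gl l m)) = (\<Sum>r<n. R (p (d (P i r))) (P r m))"
    by (subst sum.swap) (simp add: gup_glow[OF glow m] flip: rw_sum)
  finally show ?thesis using m unfolding chern_nabla_def by simp
qed

lemma sum_p10_chern_nabla_gup:
  assumes "i < n"
  shows "(\<Sum>m<n. R (p (chern_nabla gl (eb i) m)) (g m l)) = (\<Sum>r<n. R (neg_Gamma10_gup i r) (s (P l r)))"
proof -
  have "(\<Sum>m<n. R (p (chern_nabla gl (eb i) m)) (g m l)) = (\<Sum>m<n. R (neg_Gamma10 gl i m) (g m l))"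
    by (rule sum.cong) (simp_all add: chern_nabla_basis)
  also have "\<dots> = (\<Sum>r<n. R (neg_Gamma10_gup i r) (\<Sum>m<n. gl r m * g m l))"
    unfolding neg_Gamma10_def by (simp, subst sum.swap, simp)
  also have "\<dots> = (\<Sum>r<n. R (neg_Gamma10_gup i r) (s (P l r)))"
    by (rule sum.cong) (simp_all add: glow_gup[OF glow])
  finally show ?thesis .
qed

lemma p10_metric_defect_chern_nabla_basis:
  assumes i: "i < n" and l: "l < n"
  shows "p (metric_defect (chern_nabla gl) (eb i) (eb l)) = 0"
proof -
  have p10_wstar: "p (W (chern_nabla gl (eb l) j)) = W (dbE (eb l) j)" for j
    by (metis chern_nabla_p01 wstar_p01)
  have neg_Gamma10_gup_expand: "(\<Sum>r<n. R (neg_Gamma10_gup i r) (s (P l r)))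
      = (\<Sum>r<n. R (p (d (g i r))) (s (P l r)))
        - (\<Sum>r<n. \<Sum>j<n. L (g i j) (R (W (dbE (eb r) j)) (s (P l r))))"
    unfolding neg_Gamma10_gup_def by (simp add: sum_subtractf)
  have cancel: "a - (a - x - y + (x + y)) = 0" for a x y :: 'w
    by simp
  have "p (metric_defect (chern_nabla gl) (eb i) (eb l))
      = p (d (g i l)) - ((\<Sum>m<n. R (p (chern_nabla gl (eb i) m)) (g m l))
                         + (\<Sum>j<n. L (g i j) (W (dbE (eb l) j))))"
    unfolding metric_defect_def by (simp add: p10_wstar)
  also have "\<dots> = 0"
    unfolding sum_p10_chern_nabla_gup[OF i] neg_Gamma10_gup_expand
      sum_del_gup_astar_Pmat gup_wstar_dbE_expand
    by (rule cancel)
  finally show ?thesis .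
qed

lemma chern_nabla_chern_connection: "chern_connection C lE n eb ec met dbE (chern_nabla gl)"
  unfolding chern_connection_def
  using chern_nabla_left_connection chern_nabla_p01
    preserves_metric_if_p10_basis[OF chern_nabla_left_connection p10_metric_defect_chern_nabla_basis]
  by blast

end

lemma chern_connection_ex1: "\<exists>!nab. chern_connection C lE n eb ec met dbE nab"
  using is_glow_exists chern_nabla_chern_connection chern_connection_unique by metis

lemma christoffel_p01:
  "chern_connection C lE n eb ec met dbE nab \<Longrightarrow> q (christoffel eb nab i k) = - dbE (eb i) k"
  unfolding christoffel_def by (simp add: chern_p01)

lemma christoffel_p10:
  assumes chern: "chern_connection C lE n eb ec met dbE nab"
    and glow: "is_glow lE n eb ec met gl" and "i < n" "k < n"
  shows "- p (christoffel eb nab i k) = (\<Sum>j<n. R (del C (g i j)) (gl j k))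
           + (\<Sum>j<n. \<Sum>l<n. R (L (g i j) (W (q (christoffel eb nab l j)))) (gl l k))"
proof -
  have "- p (christoffel eb nab i k) = p (nab (eb i) k)" unfolding christoffel_def by simp
  also have "\<dots> = (\<Sum>l<n. R (del C (g i l)) (gl l k))
                 - (\<Sum>l<n. \<Sum>j<n. R (L (g i j) (W (dbE (eb l) j))) (gl l k))"
    using chern_p10_basis[OF chern glow] \<open>k < n\<close> .
  also have "\<dots> = (\<Sum>j<n. R (del C (g i j)) (gl j k))
                 + (\<Sum>j<n. \<Sum>l<n. R (L (g i j) (W (q (christoffel eb nab l j)))) (gl l k))"
    unfolding christoffel_def by (simp add: chern_p01[OF chern] sum_negf) (rule sum.swap)
  finally show ?thesis .
qed

end

theorem mainTheorem12:
  fixes C :: "('a::ring_1, 'w::ab_group_add, 'v::ab_group_add) calc"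
    and lE :: "'a \<Rightarrow> 'e::ab_group_add \<Rightarrow> 'e"
    and n :: nat and eb :: "nat \<Rightarrow> 'e" and ec :: "nat \<Rightarrow> 'e \<Rightarrow> 'a"
    and dbE :: "'e \<Rightarrow> nat \<Rightarrow> 'w" and met :: "'e \<Rightarrow> 'e \<Rightarrow> 'a"
  assumes "star_calculus C"
    and "integrable_cplx C"
    and "fgp_dual_basis lE n eb ec"
    and "holomorphic_structure C lE n eb ec dbE"
    and "hermitian_metric (astar C) lE met"
  shows "(\<exists>!nab. chern_connection C lE n eb ec met dbE nab) \<and>
    (\<forall>nab. chern_connection C lE n eb ec met dbE nab \<longrightarrow>
      (\<forall>i<n. \<forall>k<n. p01 C (christoffel eb nab i k) = - dbE (eb i) k) \<and>
      (\<forall>gl. is_glow lE n eb ec met gl \<longrightarrow>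
         (\<forall>i<n. \<forall>k<n.
            - p10 C (christoffel eb nab i k) =
              (\<Sum>j<n. rw C (del C (gup eb met i j)) (gl j k))
              + (\<Sum>j<n. \<Sum>l<n. rw C (lw C (gup eb met i j)
                                          (wstar C (p01 C (christoffel eb nab l j)))) (gl l k)))))"
proof -
  interpret chern_setting C lE n eb ec met dbE
    using assms by unfold_locales
  show ?thesis
    using chern_connection_ex1 christoffel_p01 christoffel_p10 by blast
qed

end
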